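(* Let $M=(E,\Delta)$ be a matroid of rank $r$ and let $M\times e$ denote its free coextension by a new element $e\notin E$. Then $$(-1)^{r+1}\chi_{M\times e}(-q)=(1+q)\,f_M(q).$$
   Context: For a matroid $M=(E,\Delta)$ of rank $r$ with rank function $\mathrm{rk}$: - The characteristic polynomial is $\chi_M(q)=\sum_{A\subseteq E}(-1)^{|A|}q^{r-\mathrm{rk}(A)}$. - The $f$-polynomial is $f_M(q)=\sum_{A\in\Delta}q^{r-|A|}=\sum_{i=0}^r f_iq^{r-i}$, where $f_i$ is the number of independent sets of size $i$. - The free extension of $M$ by $e\notin E$ is the matroid $M+e$ on $E\cup\{e\}$ whose independent sets are $\Delta\cup\{I\cup\{e\}: I\in\Delta,\ |I|\le r-1\}$. - The dual matroid $M^*$ on $E$ has as independent sets those $A\subseteq E$ with $\mathrm{rk}(E\setminus A)=r$. - The free coextension is $M\times e:=(M^*+e)^*$; it has rank $r+1$. *)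

theory Defs
  imports "HOL-Computational_Algebra.Polynomial"
begin

definition matroid :: "'a set \<Rightarrow> 'a set set \<Rightarrow> bool" where
  "matroid E I \<longleftrightarrow> finite E \<and> I \<subseteq> Pow E \<and> {} \<in> I
     \<and> (\<forall>X Y. X \<in> I \<and> Y \<subseteq> X \<longrightarrow> Y \<in> I)
     \<and> (\<forall>X Y. X \<in> I \<and> Y \<in> I \<and> card X < card Y \<longrightarrow> (\<exists>y\<in>Y - X. insert y X \<in> I))"

definition rk :: "'a set set \<Rightarrow> 'a set \<Rightarrow> nat" where
  "rk I A = Max (card ` {X \<in> I. X \<subseteq> A})"

definition mrank :: "'a set \<Rightarrow> 'a set set \<Rightarrow> nat" where
  "mrank E I = rk I E"

definition dual_indep :: "'a set \<Rightarrow> 'a set set \<Rightarrow> 'a set set" where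
  "dual_indep E I = {A. A \<subseteq> E \<and> rk I (E - A) = mrank E I}"

text \<open>Independent sets of the free extension (on ground set insert e E).
  The condition card X \<le> r - 1 is written card X < r to avoid truncated subtraction.\<close>
definition free_ext_indep :: "'a set \<Rightarrow> 'a set set \<Rightarrow> 'a \<Rightarrow> 'a set set" where
  "free_ext_indep E I e = I \<union> {insert e X | X. X \<in> I \<and> card X < mrank E I}"

text \<open>Independent sets of the free coextension M x e = (M* + e)*, on ground set insert e E.\<close>
definition free_coext_indep :: "'a set \<Rightarrow> 'a set set \<Rightarrow> 'a \<Rightarrow> 'a set set" where
  "free_coext_indep E I e = dual_indep (insert e E) (free_ext_indep E (dual_indep E I) e)"

definition char_poly :: "'a set \<Rightarrow> 'a set set \<Rightarrow> int poly" where
  "char_poly E I = (\<Sum>A\<in>Pow E. smult ((-1) ^ card A) (monom 1 (mrank E I - rk I A)))"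

definition f_poly :: "'a set \<Rightarrow> 'a set set \<Rightarrow> int poly" where
  "f_poly E I = (\<Sum>A\<in>I. monom 1 (mrank E I - card A))"

end

theory Submission
  imports Defs
begin

text \<open>
  Hence \<open>rk_N(B) = min (rk(B) + 1) |B|\<close> and \<open>rk_N(B \<union> {e}) = rk(B) + 1\<close> for \<open>B \<subseteq> E\<close>.
  Pairing the subsets \<open>B\<close> and \<open>B \<union> {e}\<close> in the defining sum of \<open>\<chi>_N\<close>, dependent \<open>B\<close>
  cancel and independent \<open>B\<close> contribute \<open>(-1)^|B| (q^(r+1-|B|) - q^(r-|B|))\<close>;
  substituting \<open>-q\<close> turns each such term into \<open>(1+q) q^(r-|B|)\<close> up to the sign \<open>(-1)^(r+1)\<close>.
\<close>

locale set_system =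
  fixes E :: "'a set" and J :: "'a set set"
  assumes finite_ground: "finite E"
    and family_subset: "J \<subseteq> Pow E"
    and empty_member: "{} \<in> J"
begin

lemma finite_family: "finite J"
  using finite_ground family_subset by (meson finite_Pow_iff finite_subset)

lemma finite_member: "X \<in> J \<Longrightarrow> finite X"
  using finite_ground family_subset by (meson PowD finite_subset subsetD)

lemma rk_ge: "X \<in> J \<Longrightarrow> X \<subseteq> A \<Longrightarrow> card X \<le> rk J A"
  unfolding rk_def using finite_family by (intro Max_ge) auto

lemma rk_attained: "\<exists>X\<in>J. X \<subseteq> A \<and> card X = rk J A"
proof -
  have "rk J A \<in> card ` {X \<in> J. X \<subseteq> A}"
    unfolding rk_def using finite_family empty_member by (intro Max_in) auto
  thus ?thesis by auto
qed

lemma rk_le: "(\<And>X. X \<in> J \<Longrightarrow> X \<subseteq> A \<Longrightarrow> card X \<le> k) \<Longrightarrow> rk J A \<le> k"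
  using rk_attained by metis

lemma rk_mono:
  assumes "A \<subseteq> B"
  shows "rk J A \<le> rk J B"
proof -
  obtain X where "X \<in> J" "X \<subseteq> A" "card X = rk J A"
    using rk_attained by blast
  thus ?thesis using rk_ge[of X B] assms by auto
qed

lemma rk_le_card: "finite A \<Longrightarrow> rk J A \<le> card A"
  by (metis card_mono rk_attained)

lemma dual_set_system: "set_system E (dual_indep E J)"
  by unfold_locales (auto simp: dual_indep_def mrank_def finite_ground)

context
  fixes e :: 'a
  assumes new: "e \<notin> E"
begin

lemma free_ext_set_system: "set_system (insert e E) (free_ext_indep E J e)"
  using family_subset finite_ground empty_member by unfold_locales (auto simp: free_ext_indep_def)

lemma rk_free_ext: "C \<subseteq> E \<Longrightarrow> rk (free_ext_indep E J e) C = rk J C"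
proof -
  assume "C \<subseteq> E"
  hence "{X \<in> free_ext_indep E J e. X \<subseteq> C} = {X \<in> J. X \<subseteq> C}"
    using new by (auto simp: free_ext_indep_def)
  thus ?thesis unfolding rk_def by simp
qed

lemma rk_free_ext_insert:
  assumes C: "C \<subseteq> E"
  shows "rk (free_ext_indep E J e) (insert e C) = min (rk J C + 1) (rk J E)"
proof (rule antisym)
  show "rk (free_ext_indep E J e) (insert e C) \<le> min (rk J C + 1) (rk J E)"
  proof (rule set_system.rk_le[OF free_ext_set_system])
    fix Y assume Y: "Y \<in> free_ext_indep E J e" "Y \<subseteq> insert e C"
    show "card Y \<le> min (rk J C + 1) (rk J E)"
    proof (cases "Y \<in> J")
      case True
      hence "Y \<subseteq> E" using family_subset by blast
      moreover from this have "Y \<subseteq> C" using Y(2) new by blast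
      ultimately show ?thesis using rk_ge[OF True, of C] rk_ge[OF True, of E] by simp
    next
      case False
      then obtain X where X: "Y = insert e X" "X \<in> J" "card X < rk J E"
        using Y(1) by (auto simp: free_ext_indep_def mrank_def)
      have "X \<subseteq> E" using X(2) family_subset by blast
      hence "X \<subseteq> C" "e \<notin> X" using Y(2) X(1) new by blast+
      thus ?thesis using X rk_ge[of X C] finite_member by simp
    qed
  qed
next
  obtain X where X: "X \<in> J" "X \<subseteq> C" "card X = rk J C"
    using rk_attained by blast
  have XE: "X \<subseteq> E" "finite X" using X(1) family_subset finite_member by blast+
  show "min (rk J C + 1) (rk J E) \<le> rk (free_ext_indep E J e) (insert e C)"
  proof (cases "rk J C < rk J E")
    case True
    hence "insert e X \<in> free_ext_indep E J e"
      using X by (auto simp: free_ext_indep_def mrank_def)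
    hence "card (insert e X) \<le> rk (free_ext_indep E J e) (insert e C)"
      using X(2) by (intro set_system.rk_ge[OF free_ext_set_system]) auto
    moreover have "e \<notin> X" using XE new by blast
    ultimately show ?thesis using X(3) XE by simp
  next
    case False
    hence "rk J C = rk J E" using rk_mono[OF C] by simp
    moreover have "X \<in> free_ext_indep E J e" using X(1) by (simp add: free_ext_indep_def)
    ultimately show ?thesis
      using X set_system.rk_ge[OF free_ext_set_system, of X "insert e C"] by auto
  qed
qed

lemma mrank_free_ext: "mrank (insert e E) (free_ext_indep E J e) = rk J E"
  using rk_free_ext_insert[of E] by (simp add: mrank_def)

end

end

locale fin_matroid =
  fixes E :: "'a set" and I :: "'a set set"
  assumes matroid: "matroid E I"

sublocale fin_matroid \<subseteq> set_system E I
  using matroid by unfold_locales (simp_all add: matroid_def)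

sublocale fin_matroid \<subseteq> dual: set_system E "dual_indep E I"
  by (rule dual_set_system)

context fin_matroid
begin

lemma indep_subset: "X \<in> I \<Longrightarrow> Y \<subseteq> X \<Longrightarrow> Y \<in> I"
  using matroid unfolding matroid_def by blast

lemma indep_augment: "X \<in> I \<Longrightarrow> Y \<in> I \<Longrightarrow> card X < card Y \<Longrightarrow> \<exists>y\<in>Y - X. insert y X \<in> I"
  using matroid unfolding matroid_def by blast

lemma rk_eq_card_iff: "finite A \<Longrightarrow> rk I A = card A \<longleftrightarrow> A \<in> I"
  by (metis card_subset_eq le_antisym order_refl rk_attained rk_ge rk_le_card)

lemma extend_to_basis:
  "X \<in> I \<Longrightarrow> X \<subseteq> Y \<Longrightarrow> \<exists>B\<in>I. X \<subseteq> B \<and> B \<subseteq> Y \<and> card B = rk I Y"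
proof (induction "rk I Y - card X" arbitrary: X rule: less_induct)
  case less
  show ?case
  proof (cases "card X = rk I Y")
    case True
    thus ?thesis using less.prems by blast
  next
    case False
    with rk_ge[OF less.prems] have lt: "card X < rk I Y" by simp
    obtain Z where Z: "Z \<in> I" "Z \<subseteq> Y" "card Z = rk I Y"
      using rk_attained by blast
    obtain y where y: "y \<in> Z - X" "insert y X \<in> I"
      using indep_augment[OF less.prems(1) Z(1)] lt Z(3) by auto
    have "card (insert y X) = card X + 1"
      using y finite_member less.prems by simp
    hence smaller: "rk I Y - card (insert y X) < rk I Y - card X" using lt by simp
    have "insert y X \<subseteq> Y" using y(1) Z(2) less.prems(2) by blast
    from less.hyps[OF smaller y(2) this] show ?thesis by blast
  qed
qed

text \<open>Lower bound: complete a basis of \<open>A\<close> to a basis \<open>B\<close> of \<open>E\<close>; then \<open>(E - A) - B\<close> is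
  co-independent.\<close>
lemma dual_rk_lower:
  assumes A: "A \<subseteq> E"
  shows "card E + rk I A \<le> rk (dual_indep E I) (E - A) + card A + rk I E"
proof -
  obtain BA where BA: "BA \<in> I" "BA \<subseteq> A" "card BA = rk I A"
    using rk_attained by blast
  moreover have "BA \<subseteq> E" using BA(2) A by blast
  ultimately obtain B where B: "B \<in> I" "BA \<subseteq> B" "B \<subseteq> E" "card B = rk I E"
    using extend_to_basis by blast
  have finB: "finite B" using finite_member B(1) by blast
  define X where "X = (E - A) - B"
  have "B \<subseteq> E - X" using B(3) unfolding X_def by blast
  hence "card B \<le> rk I (E - X)" by (rule rk_ge[OF B(1)])
  moreover have "rk I (E - X) \<le> rk I E" by (rule rk_mono) auto
  ultimately have "X \<in> dual_indep E I"
    unfolding dual_indep_def mrank_def X_def using B(4) by auto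
  hence c1: "card X \<le> rk (dual_indep E I) (E - A)"
    unfolding X_def by (intro dual.rk_ge) auto
  have "card BA \<le> card (B \<inter> A)" using BA B finB by (intro card_mono) auto
  moreover have "card (B \<inter> A) \<le> rk I A"
    using rk_ge[OF indep_subset[OF B(1)], of "B \<inter> A" A] by simp
  ultimately have c2: "card (B \<inter> A) = rk I A" using BA(3) by simp
  have "E - A = X \<union> (B - A)" "X \<inter> (B - A) = {}" using B(3) unfolding X_def by auto
  hence "card X + card (B - A) = card (E - A)"
    using finite_ground by (metis card_Un_disjoint finite_Diff finite_Un)
  moreover have "card (E - A) + card A = card E"
    using card_Int_Diff[OF finite_ground, of A] A by (simp add: Int_absorb1)
  moreover have "card B = card (B \<inter> A) + card (B - A)" using card_Int_Diff[OF finB] .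
  ultimately show ?thesis using c1 c2 B(4) by linarith
qed

text \<open>Upper bound: a maximal co-independent \<open>X \<subseteq> E - A\<close> leaves a basis \<open>B\<close> of \<open>E\<close>
  outside \<open>X\<close>, and \<open>X\<close>, \<open>B - A\<close> are disjoint subsets of \<open>E - A\<close>.\<close>
lemma dual_rk_upper:
  assumes A: "A \<subseteq> E"
  shows "rk (dual_indep E I) (E - A) + card A + rk I E \<le> card E + rk I A"
proof -
  obtain X where X: "X \<in> dual_indep E I" "X \<subseteq> E - A" "card X = rk (dual_indep E I) (E - A)"
    using dual.rk_attained by blast
  have "rk I (E - X) = rk I E" using X(1) by (simp add: dual_indep_def mrank_def)
  then obtain B where B: "B \<in> I" "B \<subseteq> E - X" "card B = rk I E"
    using rk_attained by metis
  have finB: "finite B" using finite_member B(1) by blast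
  have "card X + card (B - A) = card (X \<union> (B - A))"
    using X(2) B(2) finB finite_subset[OF X(2)] finite_ground by (intro card_Un_disjoint[symmetric]) auto
  also have "\<dots> \<le> card (E - A)"
    using X(2) B(2) finite_ground by (intro card_mono) auto
  finally have "card X + card (B - A) \<le> card (E - A)" .
  moreover have "card (E - A) + card A = card E"
    using card_Int_Diff[OF finite_ground, of A] A by (simp add: Int_absorb1)
  moreover have "card (B \<inter> A) \<le> rk I A"
    using rk_ge[OF indep_subset[OF B(1)], of "B \<inter> A" A] by simp
  moreover have "card B = card (B \<inter> A) + card (B - A)" using card_Int_Diff[OF finB] .
  ultimately show ?thesis using B(3) X(3) by linarith
qed

lemma dual_rk:
  "A \<subseteq> E \<Longrightarrow> rk (dual_indep E I) (E - A) + card A + rk I E = card E + rk I A"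
  using dual_rk_lower dual_rk_upper by (meson le_antisym)

lemma dual_rk_ground: "rk (dual_indep E I) E + rk I E = card E"
  using dual_rk[of "{}"] rk_le_card[of "{}"] by simp

end

locale matroid_coext = fin_matroid +
  fixes e :: 'a
  assumes new_elem: "e \<notin> E"
begin

text \<open>Independence in \<open>M\<times>e\<close> means that the complement has full rank in \<open>M* + e\<close>,
  whose rank is \<open>rk*(E)\<close>.\<close>
lemma coext_indep_iff:
  "Y \<in> free_coext_indep E I e \<longleftrightarrow> Y \<subseteq> insert e E
     \<and> rk (free_ext_indep E (dual_indep E I) e) (insert e E - Y) = rk (dual_indep E I) E"
  by (simp add: free_coext_indep_def dual_indep_def[of "insert e E"] dual.mrank_free_ext[OF new_elem])

lemma coext_indep_insert:
  assumes A: "A \<subseteq> E"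
  shows "insert e A \<in> free_coext_indep E I e \<longleftrightarrow> A \<in> I"
proof -
  have finA: "finite A" using A finite_ground finite_subset by blast
  have "insert e E - insert e A = E - A" using new_elem by auto
  hence "insert e A \<in> free_coext_indep E I e \<longleftrightarrow>
      rk (dual_indep E I) (E - A) = rk (dual_indep E I) E"
    using coext_indep_iff dual.rk_free_ext[OF new_elem, of "E - A"] A by auto
  also have "\<dots> \<longleftrightarrow> rk I A = card A"
    using dual_rk[OF A] dual_rk_ground rk_le_card[OF finA] by linarith
  also have "\<dots> \<longleftrightarrow> A \<in> I" using rk_eq_card_iff[OF finA] .
  finally show ?thesis .
qed

lemma coext_indep_old:
  assumes Y: "Y \<subseteq> E"
  shows "Y \<in> free_coext_indep E I e \<longleftrightarrow> card Y \<le> rk I Y + 1"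
proof -
  have "insert e E - Y = insert e (E - Y)" using Y new_elem by auto
  hence "Y \<in> free_coext_indep E I e \<longleftrightarrow>
      min (rk (dual_indep E I) (E - Y) + 1) (rk (dual_indep E I) E) = rk (dual_indep E I) E"
    using coext_indep_iff dual.rk_free_ext_insert[OF new_elem, of "E - Y"] Y by auto
  also have "\<dots> \<longleftrightarrow> card Y \<le> rk I Y + 1"
    using dual_rk[OF Y] dual_rk_ground by linarith
  finally show ?thesis .
qed

lemma coext_set_system: "set_system (insert e E) (free_coext_indep E I e)"
  using finite_ground coext_indep_old[of "{}"]
  by unfold_locales (auto simp: free_coext_indep_def dual_indep_def)

end

sublocale matroid_coext \<subseteq> coext: set_system "insert e E" "free_coext_indep E I e"
  by (rule coext_set_system)

context matroid_coext
begin

lemma rk_coext: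
  assumes B: "B \<subseteq> E"
  shows "rk (free_coext_indep E I e) B = min (rk I B + 1) (card B)"
proof (rule antisym)
  have finB: "finite B" using B finite_ground finite_subset by blast
  show "rk (free_coext_indep E I e) B \<le> min (rk I B + 1) (card B)"
  proof (rule coext.rk_le)
    fix Y assume Y: "Y \<in> free_coext_indep E I e" "Y \<subseteq> B"
    hence "card Y \<le> rk I Y + 1" using coext_indep_old B by blast
    thus "card Y \<le> min (rk I B + 1) (card B)"
      using rk_mono[OF Y(2)] card_mono[OF finB Y(2)] by simp
  qed
next
  obtain X where X: "X \<in> I" "X \<subseteq> B" "card X = rk I B"
    using rk_attained by blast
  show "min (rk I B + 1) (card B) \<le> rk (free_coext_indep E I e) B"
  proof (cases "X = B")
    case True
    hence "B \<in> free_coext_indep E I e" using coext_indep_old[OF B] X(3) by simp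
    thus ?thesis using coext.rk_ge by fastforce
  next
    case False
    then obtain b where b: "b \<in> B" "b \<notin> X" using X(2) by blast
    have "card X \<le> rk I (insert b X)" using rk_ge[OF X(1)] by blast
    moreover have c: "card (insert b X) = card X + 1" using b finite_member[OF X(1)] by simp
    moreover have "insert b X \<subseteq> E" using b(1) X(2) B by blast
    ultimately have "insert b X \<in> free_coext_indep E I e"
      using coext_indep_old by simp
    hence "card (insert b X) \<le> rk (free_coext_indep E I e) B"
      using b X(2) by (intro coext.rk_ge) auto
    thus ?thesis using c X(3) by simp
  qed
qed

lemma rk_coext_insert:
  assumes B: "B \<subseteq> E"
  shows "rk (free_coext_indep E I e) (insert e B) = rk I B + 1"
proof (rule antisym)
  show "rk (free_coext_indep E I e) (insert e B) \<le> rk I B + 1"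
  proof (rule coext.rk_le)
    fix Y assume Y: "Y \<in> free_coext_indep E I e" "Y \<subseteq> insert e B"
    show "card Y \<le> rk I B + 1"
    proof (cases "e \<in> Y")
      case True
      hence "Y = insert e (Y - {e})" "Y - {e} \<subseteq> B" using Y(2) by auto
      hence "Y - {e} \<in> I" using Y(1) coext_indep_insert B by (metis subset_trans)
      hence "card (Y - {e}) \<le> rk I B" using rk_ge \<open>Y - {e} \<subseteq> B\<close> by blast
      moreover have "finite Y" using coext.finite_member[OF Y(1)] .
      ultimately show ?thesis using True by (simp add: card_Diff_singleton)
    next
      case False
      hence "Y \<subseteq> B" using Y(2) by blast
      hence "card Y \<le> rk I Y + 1" using Y(1) coext_indep_old B by blast
      thus ?thesis using rk_mono[OF \<open>Y \<subseteq> B\<close>] by simp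
    qed
  qed
next
  obtain X where X: "X \<in> I" "X \<subseteq> B" "card X = rk I B"
    using rk_attained by blast
  have eX: "e \<notin> X" using X(2) B new_elem by blast
  have "insert e X \<in> free_coext_indep E I e"
    using coext_indep_insert X B by blast
  hence "card (insert e X) \<le> rk (free_coext_indep E I e) (insert e B)"
    using X(2) by (intro coext.rk_ge) auto
  thus "rk I B + 1 \<le> rk (free_coext_indep E I e) (insert e B)"
    using finite_member[OF X(1)] eX X(3) by simp
qed

lemma mrank_coext: "mrank (insert e E) (free_coext_indep E I e) = rk I E + 1"
  using rk_coext_insert[of E] by (simp add: mrank_def)

end

lemma sum_Pow_insert:
  assumes "finite A" and "a \<notin> A"
  shows "(\<Sum>X\<in>Pow (insert a A). f X) = (\<Sum>X\<in>Pow A. f X + f (insert a X))"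
proof -
  have inj: "inj_on (insert a) (Pow A)"
    using assms(2) by (auto simp: inj_on_def)
  have "(\<Sum>X\<in>Pow (insert a A). f X) = (\<Sum>X\<in>Pow A. f X) + (\<Sum>X\<in>insert a ` Pow A. f X)"
    unfolding Pow_insert using assms by (intro sum.union_disjoint) auto
  also have "(\<Sum>X\<in>insert a ` Pow A. f X) = (\<Sum>X\<in>Pow A. f (insert a X))"
    using sum.reindex[OF inj] by simp
  finally show ?thesis by (simp add: sum.distrib)
qed

lemma smult_sum_right: "smult c (\<Sum>x\<in>A. f x) = (\<Sum>x\<in>A. smult c (f x))"
  by (induction A rule: infinite_finite_induct) (simp_all add: smult_add_right)

lemma reflect_monomial_step:
  "smult ((-1) ^ (k + m + 1)) (pcompose (smult ((-1) ^ k) (monom 1 (Suc m) - monom 1 m)) [:0, -1:])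
     = [:1, 1:] * (monom 1 m :: int poly)" (is "?p = ?q")
proof -
  have "poly ?p x = poly ?q x" for x
  proof -
    have "poly ?p x = (-1) ^ (k + m + 1) * ((-1) ^ k * ((-x) ^ Suc m - (-x) ^ m))"
      by (simp add: poly_pcompose poly_monom)
    also have "\<dots> = (1 + x) * x ^ m"
      by (simp add: power_add power_minus[of x] algebra_simps)
    also have "\<dots> = poly ?q x" by (simp add: poly_monom distrib_right)
    finally show ?thesis .
  qed
  thus ?thesis using poly_eq_poly_eq_iff by blast
qed

context matroid_coext
begin

text \<open>The characteristic polynomial of \<open>M\<times>e\<close> as a sum over the independent sets of \<open>M\<close>:
  in the pairing \<open>B \<leftrightarrow> B \<union> {e}\<close> the contributions of dependent \<open>B\<close> cancel.\<close>
lemma char_poly_coext: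
  "char_poly (insert e E) (free_coext_indep E I e) =
     (\<Sum>B\<in>I. smult ((-1) ^ card B) (monom 1 (Suc (rk I E - card B)) - monom 1 (rk I E - card B)))"
proof -
  let ?N = "free_coext_indep E I e" and ?r = "rk I E"
  define t :: "'a set \<Rightarrow> int poly"
    where "t A = smult ((-1) ^ card A) (monom 1 (?r + 1 - rk ?N A))" for A
  define u :: "'a set \<Rightarrow> int poly"
    where "u B = smult ((-1) ^ card B) (monom 1 (Suc (?r - card B)) - monom 1 (?r - card B))" for B
  have pair: "t B + t (insert e B) = (if B \<in> I then u B else 0)" if "B \<in> Pow E" for B
  proof -
    have BE: "B \<subseteq> E" and finB: "finite B" using that finite_ground finite_subset by auto
    have "e \<notin> B" using BE new_elem by blast
    hence cB: "card (insert e B) = card B + 1" using finB by simp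
    have rB: "rk I B \<le> ?r" using rk_mono[OF BE] .
    show ?thesis
    proof (cases "B \<in> I")
      case True
      hence "rk I B = card B" using rk_eq_card_iff[OF finB] by simp
      thus ?thesis using True cB rB rk_coext[OF BE] rk_coext_insert[OF BE]
        by (simp add: t_def u_def Suc_diff_le smult_diff_right)
    next
      case False
      hence "rk I B < card B" using rk_eq_card_iff[OF finB] rk_le_card[OF finB] by simp
      thus ?thesis using False cB rk_coext[OF BE] rk_coext_insert[OF BE] by (simp add: t_def)
    qed
  qed
  have "char_poly (insert e E) ?N = (\<Sum>B\<in>Pow E. t B + t (insert e B))"
    unfolding char_poly_def mrank_coext t_def using finite_ground new_elem by (rule sum_Pow_insert)
  also have "\<dots> = (\<Sum>B\<in>Pow E. if B \<in> I then u B else 0)"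
    using pair by (rule sum.cong[OF refl])
  also have "\<dots> = (\<Sum>B\<in>{B \<in> Pow E. B \<in> I}. u B)"
    using finite_ground by (intro sum.inter_filter[symmetric]) simp
  also have "{B \<in> Pow E. B \<in> I} = I" using family_subset by blast
  finally show ?thesis unfolding u_def .
qed

end

theorem mainTheorem3:
  fixes E :: "'a set" and I :: "'a set set" and e :: 'a
  assumes "matroid E I" and "e \<notin> E"
  shows "smult ((-1) ^ (mrank E I + 1))
           (pcompose (char_poly (insert e E) (free_coext_indep E I e)) [:0, -1:])
         = [:1, 1:] * f_poly E I"
proof -
  interpret matroid_coext E I e using assms by unfold_locales
  let ?r = "rk I E"
  let ?u = "\<lambda>B. smult ((-1) ^ card B) (monom 1 (Suc (?r - card B)) - monom 1 (?r - card B) :: int poly)"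
  have reflected: "smult ((-1) ^ (?r + 1)) (pcompose (?u B) [:0, -1:]) = [:1, 1:] * monom 1 (?r - card B)"
    if "B \<in> I" for B
  proof -
    have "card B \<le> ?r" using rk_ge[OF that] family_subset that by blast
    thus ?thesis using reflect_monomial_step[of "card B" "?r - card B"] by simp
  qed
  have "smult ((-1) ^ (mrank E I + 1)) (pcompose (char_poly (insert e E) (free_coext_indep E I e)) [:0, -1:])
      = (\<Sum>B\<in>I. smult ((-1) ^ (?r + 1)) (pcompose (?u B) [:0, -1:]))"
    by (simp add: mrank_def char_poly_coext pcompose_sum smult_sum_right)
  also have "\<dots> = (\<Sum>B\<in>I. [:1, 1:] * monom 1 (?r - card B))"
    using reflected by (rule sum.cong[OF refl])
  also have "\<dots> = [:1, 1:] * f_poly E I"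
    by (simp add: f_poly_def mrank_def sum_distrib_left)
  finally show ?thesis .
qed

end
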